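(* Let $1\le r\le n$, let $d_1,\dots,d_{n-r}$ be positive integers, let $J=(x_1^{d_1},\dots,x_{n-r}^{d_{n-r}})\subseteq S$, and let $D\ge l$. If $P$ is a $D$-exact cone decomposition of $N_{JF}$ with Macaulay constants $b_0,\dots,b_{n+1}$, then \[ b_r=d_1\cdots d_{n-r}\,m+D. \]
   Context: Standing notation. $S=\mathbb{K}[x_1,\dots,x_n]$ is standard graded, and $F=Se_1\oplus\cdots\oplus Se_m$ is a graded free module with $\deg(e_j)\ge0$ integers; $l=\max_j\deg(e_j)$. Monomials of $F$ are $x^\alpha e_j$ of degree $|\alpha|+\deg(e_j)$. $N_{JF}$ is the $\mathbb{K}$-span of the monomials of $F$ not in $JF$. Cones. For a homogeneous $h\in F$ and $u\subseteq\{x_1,\dots,x_n\}$, the cone $C(h,u)=h\,\mathbb{K}[u]$ has degree $\deg h$ and dimension $|u|$. A cone decomposition of a subspace $T\subseteq F$ is a finite set $P$ of cones with $T=\bigoplus_{C\in P}C$; $P^+=\{C\in P:\dim C>0\}$. $P$ is $q$-standard if (1) no $C\in P^+$ has $\deg C<q$, and (2) for every $C\in P^+$ and every integer $d$ with $q\le d\le\deg C$ there is $C'\in P$ with $\deg C'=d$ and $\dim C'\ge\dim C$. $P$ is $q$-exact if it is $q$-standard and distinct cones of $P^+$ have distinct degrees. The Macaulay constants of a $q$-exact $P$ are $b_k=\max(\{q\}\cup\{1+\deg C:C\in P,\ \dim C\ge k\})$ for $k=0,\dots,n+1$. *)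

theory Defs
  imports Main
begin

text \<open>Monomials x^alpha e_j of F are pairs (alpha, j); variables are x_1..x_n
  (indices 1..n), basis vectors e_1..e_m (indices 1..m), deg e_j = delta j.\<close>

type_synonym mon = "(nat \<Rightarrow> nat) \<times> nat"

definition valid_mon :: "nat \<Rightarrow> nat \<Rightarrow> mon \<Rightarrow> bool" where
  "valid_mon n m x \<longleftrightarrow> (\<forall>i. fst x i \<noteq> 0 \<longrightarrow> i \<in> {1..n}) \<and> snd x \<in> {1..m}"

definition mdeg :: "(nat \<Rightarrow> nat) \<Rightarrow> nat \<Rightarrow> mon \<Rightarrow> nat" where
  "mdeg delta n x = (\<Sum>i=1..n. fst x i) + delta (snd x)"

definition in_F :: "nat \<Rightarrow> nat \<Rightarrow> (mon \<Rightarrow> 'k::field) \<Rightarrow> bool" where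
  "in_F n m f \<longleftrightarrow> finite {x. f x \<noteq> 0} \<and> (\<forall>x. f x \<noteq> 0 \<longrightarrow> valid_mon n m x)"

definition homog :: "nat \<Rightarrow> nat \<Rightarrow> (nat \<Rightarrow> nat) \<Rightarrow> nat \<Rightarrow> (mon \<Rightarrow> 'k::field) \<Rightarrow> bool" where
  "homog n m delta d f \<longleftrightarrow> in_F n m f \<and> (\<forall>x. f x \<noteq> 0 \<longrightarrow> mdeg delta n x = d)"

definition hdeg :: "nat \<Rightarrow> (nat \<Rightarrow> nat) \<Rightarrow> (mon \<Rightarrow> 'k::field) \<Rightarrow> nat" where
  "hdeg n delta f = (THE d. \<forall>x. f x \<noteq> 0 \<longrightarrow> mdeg delta n x = d)"

definition kspan :: "('a \<Rightarrow> 'k::field) set \<Rightarrow> ('a \<Rightarrow> 'k) set" where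
  "kspan S = {f. \<exists>A c. finite A \<and> A \<subseteq> S \<and> f = (\<lambda>x. \<Sum>a\<in>A. c a * a x)}"

text \<open>Multiplication by the monomial x^beta.\<close>
definition shift :: "(nat \<Rightarrow> nat) \<Rightarrow> (mon \<Rightarrow> 'k::field) \<Rightarrow> mon \<Rightarrow> 'k" where
  "shift beta f = (\<lambda>(alpha, j). if (\<forall>i. beta i \<le> alpha i) then f (alpha - beta, j) else 0)"

text \<open>A cone C(h,u) is represented by the pair (h,u); its underlying subspace is h K[u].\<close>
definition cone_set :: "(mon \<Rightarrow> 'k::field) \<times> nat set \<Rightarrow> (mon \<Rightarrow> 'k) set" where
  "cone_set C = kspan {shift beta (fst C) | beta. \<forall>i. beta i \<noteq> 0 \<longrightarrow> i \<in> snd C}"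

definition valid_cone :: "nat \<Rightarrow> nat \<Rightarrow> (nat \<Rightarrow> nat) \<Rightarrow> (mon \<Rightarrow> 'k::field) \<times> nat set \<Rightarrow> bool" where
  "valid_cone n m delta C \<longleftrightarrow> snd C \<subseteq> {1..n} \<and> fst C \<noteq> (\<lambda>_. 0) \<and> (\<exists>d. homog n m delta d (fst C))"

definition cdeg :: "nat \<Rightarrow> (nat \<Rightarrow> nat) \<Rightarrow> (mon \<Rightarrow> 'k::field) \<times> nat set \<Rightarrow> nat" where
  "cdeg n delta C = hdeg n delta (fst C)"

definition cdim :: "(mon \<Rightarrow> 'k::field) \<times> nat set \<Rightarrow> nat" where
  "cdim C = card (snd C)"

definition cone_decomp :: "nat \<Rightarrow> nat \<Rightarrow> (nat \<Rightarrow> nat) \<Rightarrow> (mon \<Rightarrow> 'k::field) set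
    \<Rightarrow> ((mon \<Rightarrow> 'k) \<times> nat set) set \<Rightarrow> bool" where
  "cone_decomp n m delta T P \<longleftrightarrow> finite P \<and> (\<forall>C\<in>P. valid_cone n m delta C) \<and>
     T = {(\<lambda>x. \<Sum>C\<in>P. g C x) | g. \<forall>C\<in>P. g C \<in> cone_set C} \<and>
     (\<forall>g. (\<forall>C\<in>P. g C \<in> cone_set C) \<longrightarrow> (\<lambda>x. \<Sum>C\<in>P. g C x) = (\<lambda>_. 0)
          \<longrightarrow> (\<forall>C\<in>P. g C = (\<lambda>_. 0)))"

definition q_standard :: "nat \<Rightarrow> (nat \<Rightarrow> nat) \<Rightarrow> nat \<Rightarrow> ((mon \<Rightarrow> 'k::field) \<times> nat set) set \<Rightarrow> bool" where
  "q_standard n delta q P \<longleftrightarrow>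
     (\<forall>C\<in>P. cdim C > 0 \<longrightarrow> q \<le> cdeg n delta C) \<and>
     (\<forall>C\<in>P. cdim C > 0 \<longrightarrow> (\<forall>d. q \<le> d \<and> d \<le> cdeg n delta C \<longrightarrow>
        (\<exists>C'\<in>P. cdeg n delta C' = d \<and> cdim C' \<ge> cdim C)))"

definition q_exact :: "nat \<Rightarrow> (nat \<Rightarrow> nat) \<Rightarrow> nat \<Rightarrow> ((mon \<Rightarrow> 'k::field) \<times> nat set) set \<Rightarrow> bool" where
  "q_exact n delta q P \<longleftrightarrow> q_standard n delta q P \<and>
     (\<forall>C\<in>P. \<forall>C'\<in>P. cdim C > 0 \<and> cdim C' > 0 \<and> C \<noteq> C' \<longrightarrow> cdeg n delta C \<noteq> cdeg n delta C')"

definition macaulay_const :: "nat \<Rightarrow> (nat \<Rightarrow> nat) \<Rightarrow> nat \<Rightarrow> ((mon \<Rightarrow> 'k::field) \<times> nat set) set \<Rightarrow> nat \<Rightarrow> nat" where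
  "macaulay_const n delta q P k = Max ({q} \<union> {1 + cdeg n delta C | C. C \<in> P \<and> cdim C \<ge> k})"

text \<open>N_{JF} for J = (x_1^{d_1},...,x_{n-r}^{d_{n-r}}): span of monomials of F not in JF.\<close>
definition N_JF :: "nat \<Rightarrow> nat \<Rightarrow> (nat \<Rightarrow> nat) \<Rightarrow> nat \<Rightarrow> (mon \<Rightarrow> 'k::field) set" where
  "N_JF n m d r = kspan {(\<lambda>y. if y = x then 1 else 0) | x.
      valid_mon n m x \<and> (\<forall>i\<in>{1..n-r}. fst x i < d i)}"

end

(*
  Compare Hilbert functions.  A cone C(h,u) contributes the Hilbert function of K[u] shifted
  by deg h, while N_JF is spanned by the monomials x^a x^b e_j with x^a in the box of exponents
  a_i < d_i in the first n - r variables and x^b arbitrary in the last r variables.  Hence the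
  shifted Hilbert functions of the K[u] over all cones add up to d_1 ... d_{n-r} m shifted
  copies of the Hilbert function of K[x_{n-r+1}, ..., x_n].  After r - 1 backward differences
  the latter become constant in large degree, the contribution of a cone becomes 0, 1 or
  unbounded according as dim C < r, = r or > r; so no cone has dimension above r and exactly
  d_1 ... d_{n-r} m cones have dimension r.  In a D-exact decomposition the degrees of these
  cones are distinct and fill an interval starting at D, which gives b_r.
*)

theory Submission
  imports
    Defs
    "HOL.Vector_Spaces"
    "HOL-Library.Function_Algebras"
    "HOL-Library.Fun_Lexorder"
    "HOL-Library.FuncSet"
begin

section \<open>Hilbert functions of polynomial rings in a subset of the variables\<close>

definition tdeg :: "nat \<Rightarrow> (nat \<Rightarrow> nat) \<Rightarrow> nat" where
  "tdeg n b = (\<Sum>i=1..n. b i)"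

definition supp_in :: "nat set \<Rightarrow> (nat \<Rightarrow> nat) \<Rightarrow> bool" where
  "supp_in u b \<longleftrightarrow> (\<forall>i. b i \<noteq> 0 \<longrightarrow> i \<in> u)"

definition exps :: "nat \<Rightarrow> nat set \<Rightarrow> nat \<Rightarrow> (nat \<Rightarrow> nat) set" where
  "exps n u s = {b. supp_in u b \<and> tdeg n b = s}"

text \<open>The Hilbert function of \<open>K[u]\<close>, extended by zero to negative degrees so that
  backward differences are defined everywhere.\<close>

definition hilb :: "nat \<Rightarrow> nat set \<Rightarrow> int \<Rightarrow> int" where
  "hilb n u t = (if t < 0 then 0 else int (card (exps n u (nat t))))"

definition bdiff :: "(int \<Rightarrow> int) \<Rightarrow> int \<Rightarrow> int" where
  "bdiff f t = f t - f (t - 1)"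

lemma tdeg_add: "tdeg n (\<lambda>i. a i + b i) = tdeg n a + tdeg n b"
  by (simp add: tdeg_def sum.distrib)

lemma component_le_tdeg: "i \<in> {1..n} \<Longrightarrow> b i \<le> tdeg n b"
  unfolding tdeg_def by (rule member_le_sum) auto

lemma finite_exps:
  assumes "u \<subseteq> {1..n}"
  shows "finite (exps n u s)"
proof -
  have "exps n u s \<subseteq> {f. \<forall>x. (x \<in> u \<longrightarrow> f x \<in> {..s}) \<and> (x \<notin> u \<longrightarrow> f x = 0)}"
    using assms by (auto simp: exps_def supp_in_def intro!: component_le_tdeg)
  moreover have "finite {f. \<forall>x. (x \<in> u \<longrightarrow> f x \<in> {..s}) \<and> (x \<notin> u \<longrightarrow> f x = (0::nat))}"
    using assms by (intro finite_set_of_finite_funs) (auto intro: finite_subset)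
  ultimately show ?thesis by (rule finite_subset)
qed

lemma exps_0:
  assumes "u \<subseteq> {1..n}"
  shows "exps n u 0 = {\<lambda>_. 0}"
proof -
  have "b = (\<lambda>_. 0)" if "supp_in u b" "tdeg n b = 0" for b
  proof
    fix i show "b i = 0"
      using that assms component_le_tdeg[of i n b] by (cases "i \<in> {1..n}") (auto simp: supp_in_def)
  qed
  then show ?thesis by (auto simp: exps_def supp_in_def tdeg_def)
qed

lemma exps_empty: "exps n {} s = (if s = 0 then {\<lambda>_. 0} else {})"
  by (auto simp: exps_def supp_in_def tdeg_def fun_eq_iff)

lemma exps_nonempty:
  assumes "u \<subseteq> {1..n}" "x \<in> u"
  shows "exps n u s \<noteq> {}"
proof -
  have "(\<lambda>i. if i = x then s else 0) \<in> exps n u s"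
    using assms by (auto simp: exps_def supp_in_def tdeg_def sum.delta subset_iff)
  then show ?thesis by blast
qed

lemma card_exps_Suc:
  assumes "u \<subseteq> {1..n}" "x \<in> u"
  shows "card (exps n u (Suc s)) = card (exps n u s) + card (exps n (u - {x}) (Suc s))"
proof -
  define ex where "ex = (\<lambda>i::nat. if i = x then 1 else (0::nat))"
  have tdeg_ex: "tdeg n ex = 1"
    using assms unfolding tdeg_def ex_def by (simp add: sum.delta subset_iff)
  have with_x: "{b \<in> exps n u (Suc s). b x \<noteq> 0} = (\<lambda>b i. b i + ex i) ` exps n u s"
  proof (intro set_eqI iffI)
    fix b assume b: "b \<in> {b \<in> exps n u (Suc s). b x \<noteq> 0}"
    have "b = (\<lambda>i. (b i - ex i) + ex i)" using b by (auto simp: ex_def fun_eq_iff)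
    moreover have "(\<lambda>i. b i - ex i) \<in> exps n u s"
      using b assms tdeg_add[of n "\<lambda>i. b i - ex i" ex] tdeg_ex \<open>b = _\<close>
      by (auto simp: exps_def supp_in_def ex_def)
    ultimately show "b \<in> (\<lambda>b i. b i + ex i) ` exps n u s" by (rule image_eqI)
  next
    fix b assume "b \<in> (\<lambda>b i. b i + ex i) ` exps n u s"
    then show "b \<in> {b \<in> exps n u (Suc s). b x \<noteq> 0}"
      using assms tdeg_add[of n _ ex] tdeg_ex
      by (auto simp: exps_def supp_in_def ex_def split: if_splits)
  qed
  let ?without_x = "exps n (u - {x}) (Suc s)"
  have "exps n u (Suc s) = ?without_x \<union> {b \<in> exps n u (Suc s). b x \<noteq> 0}"
    "?without_x \<inter> {b \<in> exps n u (Suc s). b x \<noteq> 0} = {}"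
    by (auto simp: exps_def supp_in_def)
  moreover have "card {b \<in> exps n u (Suc s). b x \<noteq> 0} = card (exps n u s)"
    unfolding with_x by (rule card_image) (auto simp: inj_on_def fun_eq_iff)
  moreover have "finite ?without_x" "finite (exps n u (Suc s))"
    using assms by (simp_all add: finite_exps subset_iff)
  ultimately show ?thesis by (metis (no_types, lifting) card_Un_disjoint finite_Un add.commute)
qed

lemma hilb_nonneg: "0 \<le> hilb n u t"
  by (simp add: hilb_def)

lemma hilb_empty: "hilb n {} t = (if t = 0 then 1 else 0)"
  by (simp add: hilb_def exps_empty)

lemma bdiff_hilb:
  assumes "u \<subseteq> {1..n}" "x \<in> u"
  shows "bdiff (hilb n u) = hilb n (u - {x})"
proof
  fix t :: int
  consider "t < 0" | "t = 0" | s where "t = int (Suc s)"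
    by (metis not0_implies_Suc not_less of_nat_0 nonneg_int_cases)
  then show "bdiff (hilb n u) t = hilb n (u - {x}) t"
  proof cases
    case 2
    then show ?thesis using assms by (simp add: bdiff_def hilb_def exps_0 subset_iff)
  next
    case 3
    then have "nat t = Suc s" "nat (t - 1) = s" by simp_all
    then show ?thesis using 3 card_exps_Suc[OF assms, of s] by (simp add: bdiff_def hilb_def)
  qed (simp add: bdiff_def hilb_def)
qed

lemma bdiff_pow_hilb:
  assumes "u \<subseteq> {1..n}" "j \<le> card u"
  obtains u' where "u' \<subseteq> u" "card u' = card u - j" "(bdiff ^^ j) (hilb n u) = hilb n u'"
proof -
  have "\<exists>u'. u' \<subseteq> u \<and> card u' = card u - j \<and> (bdiff ^^ j) (hilb n u) = hilb n u'"
    using assms(2)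
  proof (induction j)
    case (Suc j)
    then obtain u' where u': "u' \<subseteq> u" "card u' = card u - j" "(bdiff ^^ j) (hilb n u) = hilb n u'"
      by auto
    moreover have "finite u'" using assms(1) u'(1) by (auto intro: finite_subset)
    moreover obtain x where "x \<in> u'" using Suc.prems u'(2) by fastforce
    ultimately show ?case
      using bdiff_hilb[of u' n x] assms(1) by (intro exI[of _ "u' - {x}"]) auto
  qed auto
  then show ?thesis using that by blast
qed

lemma bdiff_pow_vanish:
  assumes "\<And>t. t < 0 \<or> a < t \<Longrightarrow> f t = 0"
  shows "t < 0 \<or> a + int j < t \<Longrightarrow> (bdiff ^^ j) f t = 0"
  using assms by (induction j arbitrary: t) (auto simp: bdiff_def)

lemma bdiff_pow_hilb_low:
  assumes "u \<subseteq> {1..n}" "card u \<le> j" "int j < t"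
  shows "(bdiff ^^ j) (hilb n u) t = 0"
proof -
  obtain u' where u': "u' \<subseteq> u" "card u' = 0" "(bdiff ^^ card u) (hilb n u) = hilb n u'"
    using bdiff_pow_hilb[OF assms(1) order.refl] by auto
  have "finite u'" using assms(1) u'(1) by (auto intro: finite_subset)
  then have "(bdiff ^^ card u) (hilb n u) = hilb n {}" using u' by simp
  moreover have "(bdiff ^^ j) (hilb n u) = (bdiff ^^ (j - card u)) ((bdiff ^^ card u) (hilb n u))"
    using assms(2) by (metis funpow_add le_add_diff_inverse2 o_apply)
  moreover have "(bdiff ^^ (j - card u)) (hilb n {}) t = 0"
    by (rule bdiff_pow_vanish[where a = 0]) (use assms in \<open>auto simp: hilb_empty\<close>)
  ultimately show ?thesis by simp
qed

lemma hilb_card_1: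
  assumes "u \<subseteq> {1..n}" "card u = 1" "0 \<le> t"
  shows "hilb n u t = 1"
proof -
  obtain x where u: "u = {x}" using assms(2) card_1_singletonE by blast
  have step: "hilb n u t = hilb n u (t - 1) + (if t = 0 then 1 else 0)" for t
    using fun_cong[OF bdiff_hilb[OF assms(1), of x], of t] u by (simp add: bdiff_def hilb_empty)
  have "hilb n u (int k) = 1" for k
    by (induction k) (use step[of 0] step[of "int (Suc _)"] in \<open>auto simp: hilb_def\<close>)
  then show ?thesis using assms(3) by (metis nonneg_int_cases)
qed

lemma hilb_card_ge_2:
  assumes "u \<subseteq> {1..n}" "2 \<le> card u" "0 \<le> t"
  shows "t + 1 \<le> hilb n u t"
proof -
  have "finite u" using assms(1) by (auto intro: finite_subset)
  obtain x where x: "x \<in> u" using assms(2) by (cases "u = {}") auto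
  then have "1 \<le> card (u - {x})" using assms(2) \<open>finite u\<close> by simp
  then obtain y where "y \<in> u - {x}" by (cases "u - {x} = {}") auto
  with x have xy: "x \<in> u" "y \<in> u" "x \<noteq> y" by auto
  have step: "hilb n u t = hilb n u (t - 1) + hilb n (u - {x}) t" for t
    using fun_cong[OF bdiff_hilb[OF assms(1) xy(1)], of t] by (simp add: bdiff_def)
  have pos: "1 \<le> hilb n (u - {x}) t" if "0 \<le> t" for t
    using exps_nonempty[of "u - {x}" n y "nat t"] finite_exps[of "u - {x}" n "nat t"] assms(1) xy that
    by (auto simp: hilb_def card_gt_0_iff Suc_le_eq)
  have "int k + 1 \<le> hilb n u (int k)" for k
  proof (induction k)
    case 0 then show ?case using step[of 0] pos[of 0] by (simp add: hilb_def)
  next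
    case (Suc k) then show ?case using step[of "int (Suc k)"] pos[of "int (Suc k)"] by simp
  qed
  then show ?thesis using assms(3) by (metis nonneg_int_cases)
qed

lemma bdiff_pow_hilb_top:
  assumes "u \<subseteq> {1..n}" "card u = Suc j" "0 \<le> t"
  shows "(bdiff ^^ j) (hilb n u) t = 1"
proof -
  obtain u' where "u' \<subseteq> u" "card u' = 1" "(bdiff ^^ j) (hilb n u) = hilb n u'"
    using bdiff_pow_hilb[OF assms(1), of j] assms(2) by auto
  then show ?thesis using hilb_card_1[of u' n t] assms by auto
qed

lemma bdiff_pow_hilb_high:
  assumes "u \<subseteq> {1..n}" "Suc j < card u" "0 \<le> t"
  shows "t + 1 \<le> (bdiff ^^ j) (hilb n u) t"
proof -
  obtain u' where "u' \<subseteq> u" "card u' = card u - j" "(bdiff ^^ j) (hilb n u) = hilb n u'"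
    using bdiff_pow_hilb[OF assms(1), of j] assms(2) by auto
  then show ?thesis using hilb_card_ge_2[of u' n t] assms by auto
qed

lemma bdiff_pow_shifted_sum:
  "(bdiff ^^ j) (\<lambda>t. \<Sum>a\<in>A. f a (t - c a)) = (\<lambda>t. \<Sum>a\<in>A. (bdiff ^^ j) (f a) (t - c a))"
  by (induction j) (auto simp: bdiff_def sum_subtractf diff_diff_eq add.commute)

lemma bdiff_pow_hilb_nonneg:
  assumes "u \<subseteq> {1..n}" "int j < t"
  shows "0 \<le> (bdiff ^^ j) (hilb n u) t"
proof (cases "j \<le> card u")
  case True
  then show ?thesis using bdiff_pow_hilb[OF assms(1) True] hilb_nonneg by metis
qed (use bdiff_pow_hilb_low[OF assms(1) _ assms(2)] in simp)

text \<open>If shifted Hilbert functions of \<open>K[U a]\<close> add up to those of copies of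
  \<open>K[L]\<close>, the \<open>(card L - 1)\<close>-th differences are eventually constant on the right and
  grow linearly in every summand with \<open>card (U a) > card L\<close> on the left.\<close>

lemma hilb_sum_eq_imp_top_dim:
  fixes U :: "'a \<Rightarrow> nat set" and e :: "'a \<Rightarrow> nat" and c :: "'b \<Rightarrow> nat"
  assumes fin: "finite A" "finite Q"
    and U: "\<And>a. a \<in> A \<Longrightarrow> U a \<subseteq> {1..n}" and L: "L \<subseteq> {1..n}" "card L = Suc j"
    and hilb_eq: "\<And>t. (\<Sum>a\<in>A. hilb n (U a) (t - int (e a))) = (\<Sum>q\<in>Q. hilb n L (t - int (c q)))"
  shows "\<forall>a\<in>A. card (U a) \<le> Suc j" and "card {a\<in>A. card (U a) = Suc j} = card Q"
proof -
  define v where "v a t = (bdiff ^^ j) (hilb n (U a)) (t - int (e a))" for a t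
  define T where "T = int (\<Sum>a\<in>A. e a) + int (\<Sum>q\<in>Q. c q) + int (Suc j) + int (card Q)"
  have e_le: "int (e a) + int (Suc j) + int (card Q) \<le> T" if "a \<in> A" for a
    using member_le_sum[of a A e] fin that by (simp add: T_def del: of_nat_sum)
  have c_le: "int (c q) \<le> T" if "q \<in> Q" for q
    using member_le_sum[of q Q c] fin that by (simp add: T_def del: of_nat_sum)
  have sum_v: "(\<Sum>a\<in>A. v a T) = int (card Q)"
  proof -
    have "(\<Sum>a\<in>A. v a T) = (bdiff ^^ j) (\<lambda>t. \<Sum>a\<in>A. hilb n (U a) (t - int (e a))) T"
      using bdiff_pow_shifted_sum[where f = "\<lambda>a. hilb n (U a)" and c = "\<lambda>a. int (e a)"]
      by (simp add: v_def)
    also have "\<dots> = (\<Sum>q\<in>Q. (bdiff ^^ j) (hilb n L) (T - int (c q)))"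
      using bdiff_pow_shifted_sum[where f = "\<lambda>_. hilb n L" and c = "\<lambda>q. int (c q)"]
      by (simp add: hilb_eq)
    also have "\<dots> = (\<Sum>q\<in>Q. 1)"
      using c_le by (intro sum.cong refl bdiff_pow_hilb_top[OF L]) simp
    finally show ?thesis by simp
  qed
  have large: "int j < T - int (e a)" if "a \<in> A" for a
    using e_le[OF that] by simp
  have v_le: "v a T \<le> int (card Q)" if "a \<in> A" for a
    unfolding sum_v[symmetric] using fin(1) that
    by (intro member_le_sum) (auto simp: v_def intro!: bdiff_pow_hilb_nonneg[OF U large])
  show bounded: "\<forall>a\<in>A. card (U a) \<le> Suc j"
  proof (rule ballI, rule ccontr)
    fix a assume a: "a \<in> A" and "\<not> card (U a) \<le> Suc j"
    then have "T - int (e a) + 1 \<le> v a T"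
      unfolding v_def using bdiff_pow_hilb_high[OF U[OF a]] large[OF a] by simp
    then show False using v_le[OF a] e_le[OF a] by simp
  qed
  have "v a T = (if card (U a) = Suc j then 1 else 0)" if a: "a \<in> A" for a
  proof (cases "card (U a) = Suc j")
    case True
    then show ?thesis using bdiff_pow_hilb_top[OF U[OF a] True] large[OF a] by (simp add: v_def)
  next
    case False
    then have "card (U a) \<le> j" using bounded a by fastforce
    then show ?thesis using bdiff_pow_hilb_low[OF U[OF a] _ large[OF a]] False by (simp add: v_def)
  qed
  then have "(\<Sum>a\<in>A. v a T) = int (card {a\<in>A. card (U a) = Suc j})"
    using fin(1) by (simp add: sum.If_cases Int_def)
  then show "card {a\<in>A. card (U a) = Suc j} = card Q"
    using sum_v by simp
qed

section \<open>Linear independence of the monomial multiples of a polynomial vector\<close>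

lemma less_fun_linear:
  fixes f g :: "'a::wellorder \<Rightarrow> 'b::linorder"
  assumes "f \<noteq> g"
  shows "less_fun f g \<or> less_fun g f"
proof -
  obtain k0 where "f k0 \<noteq> g k0" using assms by auto
  define k where "k = (LEAST k. f k \<noteq> g k)"
  have "f k \<noteq> g k" unfolding k_def by (rule LeastI) fact
  moreover have "\<forall>k'<k. f k' = g k'" unfolding k_def using not_less_Least by blast
  ultimately show ?thesis
    unfolding less_fun_def by (cases "f k < g k") (auto intro!: exI[of _ k])
qed

lemma less_fun_add_right:
  fixes a b c :: "'a::linorder \<Rightarrow> 'b::{linorder, ordered_cancel_ab_semigroup_add}"
  shows "less_fun a b \<Longrightarrow> less_fun (\<lambda>i. a i + c i) (\<lambda>i. b i + c i)"
  unfolding less_fun_def by (auto intro: add_strict_right_mono)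

lemma less_fun_add_left:
  fixes a b c :: "'a::linorder \<Rightarrow> 'b::{linorder, ordered_cancel_ab_semigroup_add}"
  shows "less_fun a b \<Longrightarrow> less_fun (\<lambda>i. c i + a i) (\<lambda>i. c i + b i)"
  unfolding less_fun_def by (auto intro: add_strict_left_mono)

lemma finite_less_fun_greatest:
  fixes S :: "('a::wellorder \<Rightarrow> 'b::linorder) set"
  assumes "finite S" "S \<noteq> {}"
  obtains g where "g \<in> S" "\<And>f. f \<in> S \<Longrightarrow> f \<noteq> g \<Longrightarrow> less_fun f g"
proof -
  have "\<exists>g\<in>S. \<forall>f\<in>S. f \<noteq> g \<longrightarrow> less_fun f g"
    using assms
  proof (induction S rule: finite_ne_induct)
    case (insert x F)
    then obtain g where g: "g \<in> F" "\<forall>f\<in>F. f \<noteq> g \<longrightarrow> less_fun f g" by blast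
    show ?case
    proof (cases "less_fun g x")
      case True
      have "less_fun f x" if "f \<in> F" for f
        using g(2) True that less_fun_trans by (cases "f = g") auto
      then show ?thesis by auto
    next
      case False
      then show ?thesis using g less_fun_linear[of x g] by (intro bexI[of _ g]) auto
    qed
  qed simp
  then show ?thesis using that by blast
qed

lemma shift_apply: "shift b h (a, j) = (if \<forall>i. b i \<le> a i then h (a - b, j) else 0)"
  by (simp add: shift_def)

text \<open>The coefficient of \<open>(b + a, j)\<close>, with \<open>b\<close> and \<open>a\<close> lexicographically greatest among
  the shifts used and the monomials of \<open>h\<close>, receives a contribution from \<open>b\<close> alone.\<close>

lemma shifts_independent:
  fixes h :: "mon \<Rightarrow> 'k::field"
  assumes fin: "finite {x. h x \<noteq> 0}" and nz: "h \<noteq> (\<lambda>_. 0)" and "finite A"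
    and sum0: "\<And>x. (\<Sum>b\<in>A. c b * shift b h x) = 0"
  shows "\<forall>b\<in>A. c b = 0"
proof (rule ccontr)
  assume "\<not> (\<forall>b\<in>A. c b = 0)"
  then have "finite {b\<in>A. c b \<noteq> 0}" "{b\<in>A. c b \<noteq> 0} \<noteq> {}" using \<open>finite A\<close> by auto
  then obtain bM where bM: "bM \<in> A" "c bM \<noteq> 0"
    and bM_max: "\<And>b. b \<in> A \<Longrightarrow> c b \<noteq> 0 \<Longrightarrow> b \<noteq> bM \<Longrightarrow> less_fun b bM"
    by (rule finite_less_fun_greatest) auto
  obtain a0 j where "h (a0, j) \<noteq> 0" using nz by fastforce
  have "finite {a. h (a, j) \<noteq> 0}"
    using finite_imageI[OF fin, of fst] by (rule finite_subset[rotated]) force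
  moreover from \<open>h (a0, j) \<noteq> 0\<close> have "{a. h (a, j) \<noteq> 0} \<noteq> {}" by blast
  ultimately obtain aM where aM: "h (aM, j) \<noteq> 0"
    and aM_max: "\<And>a. h (a, j) \<noteq> 0 \<Longrightarrow> a \<noteq> aM \<Longrightarrow> less_fun a aM"
    by (rule finite_less_fun_greatest) auto
  define z where "z = (\<lambda>i. bM i + aM i)"
  have other: "c b * shift b h (z, j) = 0" if "b \<in> A" "b \<noteq> bM" for b
  proof (cases "c b \<noteq> 0 \<and> (\<forall>i. b i \<le> z i)")
    case True
    then have z_eq: "z = (\<lambda>i. (z - b) i + b i)" by (auto simp: fun_eq_iff)
    have "h (z - b, j) = 0"
    proof (rule ccontr)
      assume "h (z - b, j) \<noteq> 0"
      moreover have "z - b \<noteq> aM"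
      proof
        assume "z - b = aM"
        then have "b i = bM i" for i using fun_cong[OF z_eq, of i] by (simp add: z_def)
        then show False using that(2) by auto
      qed
      ultimately have "less_fun (\<lambda>i. (z - b) i + b i) (\<lambda>i. aM i + b i)"
        by (intro less_fun_add_right aM_max)
      moreover have "less_fun (\<lambda>i. aM i + b i) (\<lambda>i. aM i + bM i)"
        using True that by (intro less_fun_add_left bM_max) auto
      moreover have "(\<lambda>i. aM i + bM i) = z" by (simp add: z_def add.commute)
      ultimately have "less_fun z z" using less_fun_trans z_eq by metis
      then show False using less_fun_irrefl by blast
    qed
    then show ?thesis using True by (simp add: shift_apply)
  qed (auto simp: shift_apply)
  have "(\<Sum>b\<in>A. c b * shift b h (z, j)) = c bM * shift bM h (z, j)"
    using \<open>finite A\<close> bM(1) other by (simp add: sum.remove sum.neutral)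
  also have "\<dots> = c bM * h (aM, j)"
    by (simp add: shift_apply z_def fun_diff_def)
  finally show False using sum0[of "(z, j)"] bM(2) aM by simp
qed

lemma inj_shift:
  fixes h :: "mon \<Rightarrow> 'k::field"
  assumes "finite {x. h x \<noteq> 0}" and "h \<noteq> (\<lambda>_. 0)"
  shows "inj (\<lambda>b. shift b h)"
proof (rule injI, rule ccontr)
  fix b b' assume eq: "shift b h = shift b' h" and ne: "b \<noteq> b'"
  have "\<forall>a\<in>{b, b'}. (if a = b then 1 else -1 :: 'k) = 0"
    by (rule shifts_independent[OF assms]) (use eq ne in auto)
  then show False by simp
qed

section \<open>Dimension count for cone decompositions of monomial subspaces\<close>

lemma sum_fun_apply: "(\<Sum>a\<in>A. f a) x = (\<Sum>a\<in>A. (f a x :: 'b::comm_monoid_add))"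
  by (induction A rule: infinite_finite_induct) (auto simp: zero_fun_def)

interpretation fun_space: vector_space "\<lambda>(c::'k::field) (f::'a \<Rightarrow> 'k) x. c * f x"
  by unfold_locales (auto simp: fun_eq_iff algebra_simps)

lemma kspan_eq_span: "kspan S = fun_space.span S"
  unfolding kspan_def fun_space.span_explicit by (auto simp: fun_eq_iff sum_fun_apply)

lemma cone_set_eq_span: "cone_set C = fun_space.span {shift b (fst C) | b. supp_in (snd C) b}"
  unfolding cone_set_def kspan_eq_span supp_in_def by simp

lemma independent_UN_direct_sum:
  fixes V B :: "'c \<Rightarrow> ('a \<Rightarrow> 'k::field) set"
  assumes "finite P"
    and subspace: "\<And>C. C \<in> P \<Longrightarrow> fun_space.subspace (V C)"
    and B: "\<And>C. C \<in> P \<Longrightarrow> B C \<subseteq> V C" "\<And>C. C \<in> P \<Longrightarrow> fun_space.independent (B C)"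
    and direct: "\<And>g. \<forall>C\<in>P. g C \<in> V C \<Longrightarrow> (\<Sum>C\<in>P. g C) = 0 \<Longrightarrow> \<forall>C\<in>P. g C = 0"
  shows "\<forall>C\<in>P. \<forall>C'\<in>P. C \<noteq> C' \<longrightarrow> B C \<inter> B C' = {}" and "fun_space.independent (\<Union>C\<in>P. B C)"
proof -
  show disjoint: "\<forall>C\<in>P. \<forall>C'\<in>P. C \<noteq> C' \<longrightarrow> B C \<inter> B C' = {}"
  proof (intro ballI impI, rule ccontr)
    fix C C' assume C: "C \<in> P" "C' \<in> P" "C \<noteq> C'" and "B C \<inter> B C' \<noteq> {}"
    then obtain b where b: "b \<in> B C" "b \<in> B C'" by blast
    define g where "g D = (if D = C then b else if D = C' then (\<lambda>x. (-1) * b x) else 0)" for D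
    have "(\<lambda>x. (-1) * b x) \<in> V C'"
      using b(2) B(1)[OF C(2)] by (intro fun_space.subspace_scale subspace C(2)) auto
    then have "\<forall>D\<in>P. g D \<in> V D"
      using b B(1)[OF C(1)] fun_space.subspace_0[OF subspace] by (auto simp: g_def)
    moreover have "(\<Sum>D\<in>P. g D) = 0"
    proof -
      have "(\<Sum>D\<in>P. g D) = g C + (g C' + (\<Sum>D\<in>P - {C} - {C'}. g D))"
        using \<open>finite P\<close> C by (simp add: sum.remove)
      also have "(\<Sum>D\<in>P - {C} - {C'}. g D) = 0" by (rule sum.neutral) (simp add: g_def)
      finally show ?thesis using C(3) by (simp add: g_def fun_eq_iff)
    qed
    ultimately have "g C = 0" using direct C(1) by blast
    then have "b = 0" by (simp add: g_def)
    then show False using b(1) B(2)[OF C(1)] fun_space.dependent_zero by blast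
  qed
  show "fun_space.independent (\<Union>C\<in>P. B C)"
    unfolding fun_space.dependent_explicit
  proof clarify
    fix T u v assume T: "finite T" "T \<subseteq> (\<Union>C\<in>P. B C)" and sum0: "(\<Sum>v\<in>T. (\<lambda>x. u v * v x)) = 0"
      and v: "v \<in> T" "u v \<noteq> 0"
    define g where "g C = (\<Sum>v\<in>T \<inter> B C. (\<lambda>x. u v * v x))" for C
    have "\<forall>C\<in>P. g C \<in> V C"
      unfolding g_def using subspace B(1)
      by (intro ballI fun_space.subspace_sum fun_space.subspace_scale) auto
    moreover have "(\<Sum>C\<in>P. g C) = 0"
    proof -
      have "(\<Sum>C\<in>P. g C) = (\<Sum>v\<in>(\<Union>C\<in>P. T \<inter> B C). (\<lambda>x. u v * v x))"
        unfolding g_def using \<open>finite P\<close> T(1) disjoint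
        by (intro sum.UNION_disjoint[symmetric]) auto
      also have "(\<Union>C\<in>P. T \<inter> B C) = T" using T(2) by blast
      finally show ?thesis using sum0 by (simp add: zero_fun_def)
    qed
    ultimately have g0: "\<forall>C\<in>P. g C = 0" by (rule direct)
    obtain C where C: "C \<in> P" "v \<in> B C" using v T(2) by blast
    have "finite (T \<inter> B C)" "T \<inter> B C \<subseteq> B C" "v \<in> T \<inter> B C" using T(1) v C by auto
    moreover have "(\<Sum>v\<in>T \<inter> B C. (\<lambda>x. u v * v x)) = 0" using g0 C(1) by (simp add: g_def)
    ultimately show False using B(2)[OF C(1)] v(2) unfolding fun_space.dependent_explicit by blast
  qed
qed

definition hpart :: "nat \<Rightarrow> (nat \<Rightarrow> nat) \<Rightarrow> nat \<Rightarrow> (mon \<Rightarrow> 'k::field) \<Rightarrow> mon \<Rightarrow> 'k" where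
  "hpart n delta t f = (\<lambda>x. if mdeg delta n x = t then f x else 0)"

definition cone_basis_deg ::
    "nat \<Rightarrow> (nat \<Rightarrow> nat) \<Rightarrow> (mon \<Rightarrow> 'k::field) \<times> nat set \<Rightarrow> nat \<Rightarrow> (mon \<Rightarrow> 'k) set" where
  "cone_basis_deg n delta C t =
     (\<lambda>b. shift b (fst C)) ` {b. supp_in (snd C) b \<and> cdeg n delta C + tdeg n b = t}"

definition mon_vec :: "mon \<Rightarrow> mon \<Rightarrow> 'k::field" where
  "mon_vec x = (\<lambda>y. if y = x then 1 else 0)"

lemma hdeg_eqI:
  assumes "homog n m delta e h" "h \<noteq> (\<lambda>_. 0)"
  shows "hdeg n delta h = e"
  unfolding hdeg_def
proof (rule the_equality)
  show "\<forall>x. h x \<noteq> 0 \<longrightarrow> mdeg delta n x = e" using assms(1) by (simp add: homog_def)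
  obtain x where "h x \<noteq> 0" using assms(2) by (auto simp: fun_eq_iff)
  then show "d = e" if "\<forall>x. h x \<noteq> 0 \<longrightarrow> mdeg delta n x = d" for d
    using that assms(1) unfolding homog_def by metis
qed

lemma valid_cone_homog:
  assumes "valid_cone n m delta C"
  shows "homog n m delta (cdeg n delta C) (fst C)"
  using assms hdeg_eqI by (fastforce simp: valid_cone_def cdeg_def)

lemma mdeg_shift:
  assumes "\<forall>i. b i \<le> a i"
  shows "mdeg delta n (a, j) = mdeg delta n (a - b, j) + tdeg n b"
proof -
  have "(\<Sum>i=1..n. a i) = (\<Sum>i=1..n. (a - b) i + b i)"
    using assms by (intro sum.cong) auto
  then show ?thesis by (simp add: mdeg_def tdeg_def sum.distrib)
qed

lemma mdeg_shift_nonzero: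
  assumes "homog n m delta e h" "shift b h x \<noteq> 0"
  shows "mdeg delta n x = e + tdeg n b"
proof -
  obtain a j where x: "x = (a, j)" by (cases x)
  then have "\<forall>i. b i \<le> a i" "h (a - b, j) \<noteq> 0"
    using assms(2) by (auto simp: shift_apply split: if_splits)
  then show ?thesis using assms(1) mdeg_shift x by (simp add: homog_def)
qed

lemma hpart_shift:
  assumes "homog n m delta e h"
  shows "hpart n delta t (shift b h) = (if e + tdeg n b = t then shift b h else 0)"
proof
  fix x show "hpart n delta t (shift b h) x = (if e + tdeg n b = t then shift b h else 0) x"
    using mdeg_shift_nonzero[OF assms, of b x] by (cases "shift b h x = 0") (auto simp: hpart_def)
qed

lemma hpart_cone_set:
  assumes "valid_cone n m delta C" "f \<in> cone_set C"
  shows "hpart n delta t f \<in> fun_space.span (cone_basis_deg n delta C t)"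
proof -
  have homog: "homog n m delta (cdeg n delta C) (fst C)" by (rule valid_cone_homog[OF assms(1)])
  obtain T c where T: "finite T" "T \<subseteq> {shift b (fst C) | b. supp_in (snd C) b}"
    and f: "f = (\<Sum>g\<in>T. (\<lambda>x. c g * g x))"
    using assms(2) unfolding cone_set_eq_span fun_space.span_explicit by blast
  have "hpart n delta t f = (\<Sum>g\<in>T. (\<lambda>x. c g * hpart n delta t g x))"
    unfolding f by (auto simp: hpart_def fun_eq_iff sum_fun_apply)
  also have "\<dots> \<in> fun_space.span (cone_basis_deg n delta C t)"
  proof (rule fun_space.span_sum, rule fun_space.span_scale)
    fix g assume "g \<in> T"
    then obtain b where b: "supp_in (snd C) b" "g = shift b (fst C)" using T(2) by auto
    show "hpart n delta t g \<in> fun_space.span (cone_basis_deg n delta C t)"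
    proof (cases "cdeg n delta C + tdeg n b = t")
      case True
      then have "hpart n delta t g \<in> cone_basis_deg n delta C t"
        using b hpart_shift[OF homog, of t b] by (auto simp: cone_basis_deg_def)
      then show ?thesis by (rule fun_space.span_base)
    next
      case False
      then show ?thesis using b hpart_shift[OF homog, of t b] fun_space.span_zero by simp
    qed
  qed
  finally show ?thesis .
qed

lemma cone_basis_deg_subset: "cone_basis_deg n delta C t \<subseteq> cone_set C"
  unfolding cone_set_eq_span cone_basis_deg_def by (auto intro: fun_space.span_base)

lemma independent_cone_basis_deg:
  assumes "valid_cone n m delta C"
  shows "fun_space.independent (cone_basis_deg n delta C t)"
proof -
  have fin: "finite {x. fst C x \<noteq> 0}" and nz: "fst C \<noteq> (\<lambda>_. 0)"
    using valid_cone_homog[OF assms] assms by (auto simp: homog_def in_F_def valid_cone_def)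
  have inj: "inj (\<lambda>b. shift b (fst C))" by (rule inj_shift[OF fin nz])
  show ?thesis unfolding fun_space.dependent_explicit
  proof clarify
    fix T u v assume T: "finite T" "T \<subseteq> cone_basis_deg n delta C t"
      and sum0: "(\<Sum>v\<in>T. (\<lambda>x. u v * v x)) = 0" and v: "v \<in> T" "u v \<noteq> 0"
    define A where "A = (\<lambda>b. shift b (fst C)) -` T"
    have T_eq: "T = (\<lambda>b. shift b (fst C)) ` A" using T(2) by (auto simp: A_def cone_basis_deg_def)
    have "\<forall>b\<in>A. u (shift b (fst C)) = 0"
    proof (rule shifts_independent[OF fin nz])
      show "finite A" unfolding A_def using T(1) inj by (intro finite_vimageI)
      fix x
      have "(\<Sum>b\<in>A. u (shift b (fst C)) * shift b (fst C) x) = (\<Sum>v\<in>T. u v * v x)"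
        unfolding T_eq by (rule sum.reindex_cong[symmetric, OF inj_on_subset[OF inj]]) auto
      then show "(\<Sum>b\<in>A. u (shift b (fst C)) * shift b (fst C) x) = 0"
        using fun_cong[OF sum0, of x] by (simp add: sum_fun_apply)
    qed
    then show False using v T_eq by auto
  qed
qed

lemma finite_cone_basis_deg:
  assumes "valid_cone n m delta C"
  shows "finite (cone_basis_deg n delta C t)"
proof -
  have "{b. supp_in (snd C) b \<and> cdeg n delta C + tdeg n b = t} \<subseteq> exps n (snd C) (t - cdeg n delta C)"
    by (auto simp: exps_def)
  moreover have "finite (exps n (snd C) (t - cdeg n delta C))"
    using assms by (simp add: finite_exps valid_cone_def)
  ultimately show ?thesis unfolding cone_basis_deg_def by (blast intro: finite_subset)
qed

lemma card_cone_basis_deg: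
  assumes "valid_cone n m delta C"
  shows "card (cone_basis_deg n delta C t) = card {b. supp_in (snd C) b \<and> cdeg n delta C + tdeg n b = t}"
proof -
  have "finite {x. fst C x \<noteq> 0}" "fst C \<noteq> (\<lambda>_. 0)"
    using valid_cone_homog[OF assms] assms by (auto simp: homog_def in_F_def valid_cone_def)
  then show ?thesis
    unfolding cone_basis_deg_def by (intro card_image inj_on_subset[OF inj_shift]) auto
qed

lemma inj_mon_vec: "inj mon_vec"
  by (rule injI) (auto simp: mon_vec_def fun_eq_iff split: if_splits)

lemma independent_mon_vec: "fun_space.independent ((mon_vec :: mon \<Rightarrow> mon \<Rightarrow> 'k::field) ` X)"
  unfolding fun_space.dependent_explicit
proof clarify
  fix T u v assume T: "finite T" "T \<subseteq> (mon_vec :: mon \<Rightarrow> mon \<Rightarrow> 'k) ` X"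
    and sum0: "(\<Sum>v\<in>T. (\<lambda>x. u v * v x)) = 0" and v: "v \<in> T" "u v \<noteq> 0"
  obtain y where y: "v = mon_vec y" using v T by auto
  have "w y = 0" if "w \<in> T - {v}" for w
    using that T(2) y by (auto simp: mon_vec_def)
  then have "(\<Sum>w\<in>T. u w * w y) = u v"
    using T(1) v(1) by (simp add: sum.remove sum.neutral y mon_vec_def)
  moreover have "(\<Sum>w\<in>T. u w * w y) = 0" using fun_cong[OF sum0, of y] by (simp add: sum_fun_apply)
  ultimately show False using v(2) by simp
qed

lemma span_mon_vec_support:
  assumes "f \<in> fun_space.span ((mon_vec :: mon \<Rightarrow> mon \<Rightarrow> 'k::field) ` X)"
  shows "finite {x. f x \<noteq> 0}" and "{x. f x \<noteq> 0} \<subseteq> X"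
proof -
  obtain T c where T: "finite T" "T \<subseteq> mon_vec ` X" and f: "f = (\<Sum>a\<in>T. (\<lambda>x. c a * a x))"
    using assms unfolding fun_space.span_explicit by blast
  obtain Y where Y: "Y \<subseteq> X" "T = mon_vec ` Y" "finite Y"
    using T by (metis finite_subset_image)
  have "{x. f x \<noteq> 0} \<subseteq> Y"
  proof
    fix x assume "x \<in> {x. f x \<noteq> 0}"
    then have "(\<Sum>a\<in>T. c a * a x) \<noteq> 0" by (simp add: f sum_fun_apply)
    moreover have "(\<Sum>a\<in>T. c a * a x) = 0" if "\<forall>a\<in>T. a x = 0" using that by (simp add: sum.neutral)
    ultimately obtain a where "a \<in> T" "a x \<noteq> 0" by blast
    then show "x \<in> Y" using Y(2) by (auto simp: mon_vec_def split: if_splits)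
  qed
  then show "finite {x. f x \<noteq> 0}" "{x. f x \<noteq> 0} \<subseteq> X"
    using Y finite_subset by blast+
qed

lemma in_span_mon_vec:
  fixes f :: "mon \<Rightarrow> 'k::field"
  assumes "finite {x. f x \<noteq> 0}" "{x. f x \<noteq> 0} \<subseteq> X"
  shows "f \<in> fun_space.span (mon_vec ` X)"
proof -
  have "f = (\<Sum>x\<in>{x. f x \<noteq> 0}. (\<lambda>y. f x * mon_vec x y))"
    using assms(1) by (auto simp: fun_eq_iff sum_fun_apply mon_vec_def if_distrib sum.delta' cong: if_cong)
  also have "\<dots> \<in> fun_space.span (mon_vec ` X)"
    using assms(2) by (intro fun_space.span_sum fun_space.span_scale fun_space.span_base) auto
  finally show ?thesis .
qed

lemma cone_set_subset_cone_decomp: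
  assumes "cone_decomp n m delta T P" "C \<in> P"
  shows "cone_set C \<subseteq> T"
proof
  fix f assume f: "f \<in> cone_set C"
  define g where "g D = (\<lambda>x. if D = C then f x else 0)" for D
  have "g D \<in> cone_set D" for D
    using f fun_space.span_zero[of "{shift b (fst D) | b. supp_in (snd D) b}"]
    by (cases "D = C") (simp_all add: g_def cone_set_eq_span zero_fun_def)
  then have "\<forall>D\<in>P. g D \<in> cone_set D" by blast
  moreover have "(\<lambda>x. \<Sum>D\<in>P. g D x) = f"
    using assms by (simp add: g_def cone_decomp_def)
  ultimately show "f \<in> T" using assms(1) unfolding cone_decomp_def by blast
qed

text \<open>Comparing dimensions of the degree-\<open>t\<close> parts: the generators of degree \<open>t\<close> of all
  cones together form a basis of the degree-\<open>t\<close> part of a monomial subspace.\<close>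

lemma cone_decomp_card_deg:
  fixes P :: "((mon \<Rightarrow> 'k::field) \<times> nat set) set"
  assumes dec: "cone_decomp n m delta (fun_space.span (mon_vec ` X)) P"
  shows "(\<Sum>C\<in>P. card (cone_basis_deg n delta C t)) = card {x\<in>X. mdeg delta n x = t}"
proof -
  let ?T = "fun_space.span ((mon_vec :: mon \<Rightarrow> mon \<Rightarrow> 'k) ` X)"
  let ?B = "\<lambda>C. cone_basis_deg n delta C t"
  let ?U = "\<Union>C\<in>P. ?B C"
  define Xt where "Xt = {x\<in>X. mdeg delta n x = t}"
  have finP: "finite P" and valid: "\<And>C. C \<in> P \<Longrightarrow> valid_cone n m delta C"
    and T: "?T = {(\<lambda>x. \<Sum>C\<in>P. g C x) | g. \<forall>C\<in>P. g C \<in> cone_set C}"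
    and direct: "\<And>g. \<forall>C\<in>P. g C \<in> cone_set C \<Longrightarrow> (\<lambda>x. \<Sum>C\<in>P. g C x) = (\<lambda>_. 0)
      \<Longrightarrow> \<forall>C\<in>P. g C = (\<lambda>_. 0)"
    using dec unfolding cone_decomp_def by blast+
  have direct_sum: "\<forall>C\<in>P. g C = 0" if "\<forall>C\<in>P. g C \<in> cone_set C" "(\<Sum>C\<in>P. g C) = 0" for g
    using direct[OF that(1)] that(2) by (simp add: fun_eq_iff sum_fun_apply zero_fun_def)
  have subspace: "fun_space.subspace (cone_set C)" for C :: "(mon \<Rightarrow> 'k) \<times> nat set"
    unfolding cone_set_eq_span by (rule fun_space.subspace_span)
  note U = independent_UN_direct_sum[of P cone_set ?B,
      OF finP subspace cone_basis_deg_subset independent_cone_basis_deg[OF valid] direct_sum]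
  have U_sub: "?U \<subseteq> fun_space.span (mon_vec ` Xt)"
  proof
    fix b assume "b \<in> ?U"
    then obtain C where C: "C \<in> P" "b \<in> ?B C" by blast
    have "b \<in> ?T"
      using cone_set_subset_cone_decomp[OF dec C(1)] cone_basis_deg_subset C(2) by blast
    then have "finite {x. b x \<noteq> 0}" "{x. b x \<noteq> 0} \<subseteq> X" by (rule span_mon_vec_support)+
    moreover obtain \<beta> where "b = shift \<beta> (fst C)" "cdeg n delta C + tdeg n \<beta> = t"
      using C(2) by (auto simp: cone_basis_deg_def)
    then have "{x. b x \<noteq> 0} \<subseteq> {x. mdeg delta n x = t}"
      using mdeg_shift_nonzero[OF valid_cone_homog[OF valid[OF C(1)]]] by auto
    ultimately show "b \<in> fun_space.span (mon_vec ` Xt)"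
      by (intro in_span_mon_vec) (auto simp: Xt_def)
  qed
  have Xt_sub: "mon_vec ` Xt \<subseteq> fun_space.span ?U"
  proof
    fix f :: "mon \<Rightarrow> 'k" assume "f \<in> mon_vec ` Xt"
    then obtain x where x: "x \<in> Xt" "f = mon_vec x" by blast
    then have "f \<in> ?T" by (auto simp: Xt_def intro: fun_space.span_base)
    then obtain g where g: "\<forall>C\<in>P. g C \<in> cone_set C" "f = (\<lambda>x. \<Sum>C\<in>P. g C x)"
      unfolding T by blast
    have "f = hpart n delta t f" using x by (auto simp: hpart_def mon_vec_def fun_eq_iff Xt_def)
    also have "\<dots> = (\<Sum>C\<in>P. hpart n delta t (g C))"
      unfolding g(2) by (auto simp: hpart_def fun_eq_iff sum_fun_apply)
    also have "\<dots> \<in> fun_space.span ?U"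
    proof (rule fun_space.span_sum)
      fix C assume C: "C \<in> P"
      then have "fun_space.span (?B C) \<subseteq> fun_space.span ?U" by (intro fun_space.span_mono) blast
      then show "hpart n delta t (g C) \<in> fun_space.span ?U"
        using hpart_cone_set[OF valid[OF C]] g(1) C by blast
    qed
    finally show "f \<in> fun_space.span ?U" .
  qed
  have "card ?U = fun_space.dim (fun_space.span ((mon_vec :: mon \<Rightarrow> mon \<Rightarrow> 'k) ` Xt))"
    by (rule fun_space.basis_card_eq_dim[OF U_sub
          fun_space.span_minimal[OF Xt_sub fun_space.subspace_span] U(2)])
  also have "\<dots> = card ((mon_vec :: mon \<Rightarrow> mon \<Rightarrow> 'k) ` Xt)"
    by (rule fun_space.basis_card_eq_dim[OF fun_space.span_superset order.refl independent_mon_vec,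
          symmetric])
  also have "\<dots> = card Xt" by (rule card_image[OF inj_on_subset[OF inj_mon_vec]]) simp
  finally have "card ?U = card Xt" .
  moreover have "card ?U = (\<Sum>C\<in>P. card (?B C))"
    by (rule card_UN_disjoint[OF finP _ U(1)]) (use finite_cone_basis_deg[OF valid] in blast)
  ultimately show ?thesis by (simp add: Xt_def)
qed

section \<open>Monomials outside \<open>J F\<close>\<close>

definition box :: "nat \<Rightarrow> nat \<Rightarrow> (nat \<Rightarrow> nat) \<Rightarrow> (nat \<Rightarrow> nat) set" where
  "box n r d = {a. \<forall>i. (i \<in> {1..n-r} \<longrightarrow> a i < d i) \<and> (i \<notin> {1..n-r} \<longrightarrow> a i = 0)}"

lemma box_eq_image:
  "box n r d = (\<lambda>g i. if i \<in> {1..n-r} then g i else 0) ` PiE {1..n-r} (\<lambda>i. {..<d i})"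
proof (intro set_eqI iffI)
  fix a assume "a \<in> box n r d"
  then have "a = (\<lambda>i. if i \<in> {1..n-r} then restrict a {1..n-r} i else 0)"
    "restrict a {1..n-r} \<in> PiE {1..n-r} (\<lambda>i. {..<d i})"
    by (auto simp: box_def fun_eq_iff)
  then show "a \<in> (\<lambda>g i. if i \<in> {1..n-r} then g i else 0) ` PiE {1..n-r} (\<lambda>i. {..<d i})"
    by (rule image_eqI)
qed (auto simp: box_def PiE_def)

lemma box_zero: "a \<in> box n r d \<Longrightarrow> i \<notin> {1..n-r} \<Longrightarrow> a i = 0"
  by (simp add: box_def)

lemma finite_box: "finite (box n r d)"
  unfolding box_eq_image by (intro finite_imageI finite_PiE) auto

lemma card_box: "card (box n r d) = (\<Prod>i=1..n-r. d i)"
proof -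
  have "inj_on (\<lambda>g i. if i \<in> {1..n-r} then g i else 0) (PiE {1..n-r} (\<lambda>i. {..<d i}))"
  proof (rule inj_onI)
    fix g h assume gh: "g \<in> PiE {1..n-r} (\<lambda>i. {..<d i})" "h \<in> PiE {1..n-r} (\<lambda>i. {..<d i})"
      and eq: "(\<lambda>i. if i \<in> {1..n-r} then g i else 0) = (\<lambda>i. if i \<in> {1..n-r} then h i else 0)"
    show "g = h"
    proof (rule PiE_ext[OF gh])
      show "g i = h i" if "i \<in> {1..n-r}" for i using fun_cong[OF eq, of i] that by simp
    qed
  qed
  then show ?thesis unfolding box_eq_image by (simp add: card_image card_PiE)
qed

lemma N_JF_eq_span:
  "N_JF n m d r = fun_space.span (mon_vec ` {x. valid_mon n m x \<and> (\<forall>i\<in>{1..n-r}. fst x i < d i)})"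
  unfolding N_JF_def kspan_eq_span mon_vec_def by (rule arg_cong[where f = fun_space.span]) blast

text \<open>A monomial outside \<open>J F\<close> splits uniquely into its part in the first \<open>n - r\<close>
  variables, which lies in the box, and its part in the last \<open>r\<close> variables, which is free.\<close>

lemma card_N_JF_mons_deg:
  assumes "r \<le> n"
  shows "card {x. (valid_mon n m x \<and> (\<forall>i\<in>{1..n-r}. fst x i < d i)) \<and> mdeg delta n x = t} =
    (\<Sum>p\<in>box n r d \<times> {1..m}.
       card {b. supp_in {n-r+1..n} b \<and> tdeg n (fst p) + delta (snd p) + tdeg n b = t})"
proof -
  let ?L = "{n-r+1..n}"
  let ?S = "SIGMA p:box n r d \<times> {1..m}. {b. supp_in ?L b \<and> tdeg n (fst p) + delta (snd p) + tdeg n b = t}"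
  let ?X = "{x. (valid_mon n m x \<and> (\<forall>i\<in>{1..n-r}. fst x i < d i)) \<and> mdeg delta n x = t}"
  define low where "low a i = (if i \<le> n - r then a i else 0)" for a :: "nat \<Rightarrow> nat" and i
  define high where "high a i = (if i \<le> n - r then 0 else a i)" for a :: "nat \<Rightarrow> nat" and i
  define decompose where "decompose x = ((low (fst x), snd x), high (fst x))" for x :: mon
  have sum_low_high: "a = (\<lambda>i. low a i + high a i)" for a by (auto simp: low_def high_def)
  have "inj decompose"
  proof (rule injI)
    fix x y assume "decompose x = decompose y"
    then have eq: "low (fst x) = low (fst y)" "high (fst x) = high (fst y)" "snd x = snd y"
      by (auto simp: decompose_def)
    have "fst x i = fst y i" for i
      using fun_cong[OF eq(1), of i] fun_cong[OF eq(2), of i] by (simp add: low_def high_def split: if_splits)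
    then show "x = y" using eq(3) by (simp add: prod_eq_iff fun_eq_iff)
  qed
  moreover have "decompose ` ?X = ?S"
  proof (intro set_eqI iffI)
    fix y assume "y \<in> decompose ` ?X"
    then obtain a j where x: "(a, j) \<in> ?X" and y: "y = decompose (a, j)" by auto
    have "mdeg delta n (a, j) = tdeg n (low a) + delta j + tdeg n (high a)"
      using tdeg_add[of n "low a" "high a"] sum_low_high[of a] by (simp add: mdeg_def tdeg_def)
    then show "y \<in> ?S"
      using x assms by (auto simp: y decompose_def box_def valid_mon_def supp_in_def low_def high_def)
  next
    fix y assume "y \<in> ?S"
    then obtain a1 j a2 where y: "y = ((a1, j), a2)" and a1: "a1 \<in> box n r d" and j: "j \<in> {1..m}"
      and a2: "supp_in ?L a2" and deg: "tdeg n a1 + delta j + tdeg n a2 = t"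
      by auto
    have low: "low (\<lambda>i. a1 i + a2 i) = a1" and high: "high (\<lambda>i. a1 i + a2 i) = a2"
      using a1 a2 by (auto simp: box_def supp_in_def low_def high_def fun_eq_iff)
    have supp1: "a1 i \<noteq> 0 \<Longrightarrow> i \<in> {1..n-r}" for i using box_zero[OF a1, of i] by argo
    have supp2: "a2 i \<noteq> 0 \<Longrightarrow> i \<in> ?L" for i using a2 unfolding supp_in_def by blast
    have "i \<in> {1..n}" if "a1 i + a2 i \<noteq> 0" for i
    proof (cases "a1 i = 0")
      case True
      then show ?thesis using supp2[of i] that by auto
    next
      case False
      then show ?thesis using supp1[of i] by auto
    qed
    then have "valid_mon n m ((\<lambda>i. a1 i + a2 i), j)" using j by (simp add: valid_mon_def)
    moreover have "a1 i + a2 i < d i" if "i \<in> {1..n-r}" for i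
    proof -
      have "a2 i = 0" using supp2[of i] that by (cases "a2 i = 0") auto
      moreover have "a1 i < d i" using a1 that by (simp add: box_def)
      ultimately show ?thesis by simp
    qed
    moreover have "mdeg delta n ((\<lambda>i. a1 i + a2 i), j) = t"
      using deg tdeg_add[of n a1 a2] by (simp add: mdeg_def tdeg_def)
    ultimately have "((\<lambda>i. a1 i + a2 i), j) \<in> ?X" by simp
    moreover have "y = decompose ((\<lambda>i. a1 i + a2 i), j)" by (simp add: y decompose_def low high)
    ultimately show "y \<in> decompose ` ?X" by blast
  qed
  ultimately have "card ?X = card ?S"
    using card_image[OF inj_on_subset[of decompose UNIV ?X]] by simp
  also have "\<dots> = (\<Sum>p\<in>box n r d \<times> {1..m}.
       card {b. supp_in ?L b \<and> tdeg n (fst p) + delta (snd p) + tdeg n b = t})"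
  proof (rule card_SigmaI)
    show "finite (box n r d \<times> {1..m})" by (simp add: finite_box)
    show "\<forall>p\<in>box n r d \<times> {1..m}. finite {b. supp_in ?L b \<and> tdeg n (fst p) + delta (snd p) + tdeg n b = t}"
    proof
      fix p
      have "{b. supp_in ?L b \<and> tdeg n (fst p) + delta (snd p) + tdeg n b = t}
          \<subseteq> exps n ?L (t - (tdeg n (fst p) + delta (snd p)))"
        by (auto simp: exps_def)
      then show "finite {b. supp_in ?L b \<and> tdeg n (fst p) + delta (snd p) + tdeg n b = t}"
        by (rule finite_subset) (simp add: finite_exps)
    qed
  qed
  finally show ?thesis .
qed

section \<open>Hilbert functions and Macaulay constants of the decomposition\<close>

lemma hilb_of_nat_diff:
  "hilb n u (int t - int e) = int (card {b. supp_in u b \<and> e + tdeg n b = t})"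
proof (cases "e \<le> t")
  case True
  then have "{b. supp_in u b \<and> e + tdeg n b = t} = exps n u (t - e)" by (auto simp: exps_def)
  moreover have "\<not> int t - int e < 0" "nat (int t - int e) = t - e" using True by simp_all
  ultimately show ?thesis by (simp only: hilb_def if_False)
next
  case False
  then have "{b. supp_in u b \<and> e + tdeg n b = t} = {}" by auto
  then show ?thesis using False by (simp add: hilb_def)
qed


lemma hilb_sum_N_JF:
  fixes P :: "((mon \<Rightarrow> 'k::field) \<times> nat set) set"
  assumes dec: "cone_decomp n m delta (N_JF n m d r) P" and "r \<le> n"
  shows "(\<Sum>C\<in>P. hilb n (snd C) (t - int (cdeg n delta C))) =
    (\<Sum>p\<in>box n r d \<times> {1..m}. hilb n {n-r+1..n} (t - int (tdeg n (fst p) + delta (snd p))))"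
proof (cases "t < 0")
  case False
  then obtain k where t: "t = int k" by (metis nonneg_int_cases not_less)
  have valid: "\<And>C. C \<in> P \<Longrightarrow> valid_cone n m delta C"
    using dec by (simp add: cone_decomp_def)
  have "(\<Sum>C\<in>P. hilb n (snd C) (t - int (cdeg n delta C))) =
      int (\<Sum>C\<in>P. card (cone_basis_deg n delta C k))"
    unfolding t hilb_of_nat_diff of_nat_sum by (simp add: card_cone_basis_deg[OF valid])
  also have "\<dots> = int (card {x. (valid_mon n m x \<and> (\<forall>i\<in>{1..n-r}. fst x i < d i)) \<and> mdeg delta n x = k})"
    using cone_decomp_card_deg[OF dec[unfolded N_JF_eq_span]] by simp
  also have "\<dots> = (\<Sum>p\<in>box n r d \<times> {1..m}. hilb n {n-r+1..n} (t - int (tdeg n (fst p) + delta (snd p))))"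
    unfolding card_N_JF_mons_deg[OF assms(2)] t hilb_of_nat_diff of_nat_sum by simp
  finally show ?thesis .
qed (simp add: hilb_def)

text \<open>In a \<open>q\<close>-exact decomposition the cones of dimension at least \<open>k \<ge> 1\<close> have pairwise
  distinct degrees, all at least \<open>q\<close>, forming a set closed downwards to \<open>q\<close>: an interval
  starting at \<open>q\<close>.\<close>

lemma macaulay_const_exact:
  fixes P :: "((mon \<Rightarrow> 'k::field) \<times> nat set) set"
  assumes "finite P" and exact: "q_exact n delta q P" and "1 \<le> k"
    and card: "card {C\<in>P. k \<le> cdim C} = M" and "1 \<le> M"
  shows "macaulay_const n delta q P k = M + q"
proof -
  define E where "E = cdeg n delta ` {C\<in>P. k \<le> cdim C}"
  have lower: "\<And>C. C \<in> P \<Longrightarrow> 0 < cdim C \<Longrightarrow> q \<le> cdeg n delta C"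
    and down: "\<And>C e. C \<in> P \<Longrightarrow> 0 < cdim C \<Longrightarrow> q \<le> e \<Longrightarrow> e \<le> cdeg n delta C \<Longrightarrow>
        \<exists>C'\<in>P. cdeg n delta C' = e \<and> cdim C \<le> cdim C'"
    and distinct: "\<And>C C'. C \<in> P \<Longrightarrow> C' \<in> P \<Longrightarrow> 0 < cdim C \<Longrightarrow> 0 < cdim C' \<Longrightarrow> C \<noteq> C' \<Longrightarrow>
        cdeg n delta C \<noteq> cdeg n delta C'"
    using exact unfolding q_exact_def q_standard_def by blast+
  have "inj_on (cdeg n delta) {C\<in>P. k \<le> cdim C}"
    by (rule inj_onI) (use distinct \<open>1 \<le> k\<close> in fastforce)
  then have card_E: "card E = M" using card by (simp add: E_def card_image)
  have finE: "finite E" using \<open>finite P\<close> by (simp add: E_def)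
  have E_lower: "q \<le> e" if "e \<in> E" for e
    using that lower \<open>1 \<le> k\<close> by (fastforce simp: E_def)
  have E_down: "e' \<in> E" if e: "e \<in> E" "q \<le> e'" "e' \<le> e" for e e'
  proof -
    obtain C where C: "C \<in> P" "k \<le> cdim C" "e = cdeg n delta C"
      using e(1) unfolding E_def by blast
    then obtain C' where "C' \<in> P" "cdeg n delta C' = e'" "cdim C \<le> cdim C'"
      using down[of C e'] e \<open>1 \<le> k\<close> by auto
    then show ?thesis using C by (auto simp: E_def)
  qed
  have "E \<noteq> {}" using card_E \<open>1 \<le> M\<close> by auto
  define mx where "mx = Max E"
  have mx: "mx \<in> E" using finE \<open>E \<noteq> {}\<close> by (simp add: mx_def)
  have E_eq: "E = {q..mx}"
  proof
    show "E \<subseteq> {q..mx}" using E_lower finE by (auto simp: mx_def)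
    show "{q..mx} \<subseteq> E" using E_down[OF mx] by auto
  qed
  then have "mx + 1 = M + q" using card_E E_lower[OF mx] by simp
  moreover have "{1 + cdeg n delta C | C. C \<in> P \<and> k \<le> cdim C} = Suc ` E"
    by (auto simp: E_def)
  ultimately show ?thesis
    unfolding macaulay_const_def E_eq using E_lower[OF mx] by (intro Max_eqI) auto
qed

theorem corollary7p4:
  fixes n m r D :: nat and delta d :: "nat \<Rightarrow> nat"
    and P :: "((mon \<Rightarrow> 'k::field) \<times> nat set) set"
  assumes "1 \<le> r" and "r \<le> n" and "1 \<le> m"
    and "\<forall>i\<in>{1..n-r}. 0 < d i"
    and "Max (delta ` {1..m}) \<le> D"
    and "cone_decomp n m delta (N_JF n m d r) P"
    and "q_exact n delta D P"
  shows "macaulay_const n delta D P r = (\<Prod>i=1..n-r. d i) * m + D"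
proof -
  have finP: "finite P" and dims: "\<And>C. C \<in> P \<Longrightarrow> snd C \<subseteq> {1..n}"
    using assms(6) by (auto simp: cone_decomp_def valid_cone_def)
  have L: "{n-r+1..n} \<subseteq> {1..n}" "card {n-r+1..n} = Suc (r - 1)" using assms(1,2) by auto
  note top_dim = hilb_sum_eq_imp_top_dim[OF finP _ dims L hilb_sum_N_JF[OF assms(6,2)]]
  have "{C\<in>P. r \<le> cdim C} = {C\<in>P. card (snd C) = Suc (r - 1)}"
    using top_dim(1) assms(1) by (force simp: finite_box cdim_def)
  then have "card {C\<in>P. r \<le> cdim C} = (\<Prod>i=1..n-r. d i) * m"
    using top_dim(2) by (simp add: finite_box card_cartesian_product card_box)
  moreover have "1 \<le> (\<Prod>i=1..n-r. d i) * m"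
    using assms(3,4) by (simp add: Suc_le_eq prod_pos)
  ultimately show ?thesis by (rule macaulay_const_exact[OF finP assms(7) assms(1)])
qed

end
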